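(* Consider the augmented Lagrange algorithm described in the context (with arbitrary choices of solutions in step (1)), and assume that only finitely many of its steps are successful. Then $\limsup_{k\to\infty}(\bar\mu_k,\psi-\bar y_k)_+\le0$.
   Context: Setting. Let $\Omega\subset\mathbb{R}^N$, $N\in\{2,3\}$, be a bounded domain with $C^{1,1}$ boundary $\Gamma$, or a bounded convex domain with polygonal boundary $\Gamma$. Let $y_d\in L^2(\Omega)$, $\psi\in C(\bar\Omega)$, $\alpha>0$, $u_a,u_b\in L^\infty(\Omega)$ with $u_a\le u_b$, $U_{ad}=\{u\in L^\infty(\Omega): u_a\le u\le u_b\text{ a.e.}\}$. Let $Ay=-\sum_{i,j=1}^N\partial_{x_j}(a_{ij}\partial_{x_i}y)+a_0y$ with $a_{ij}\in C^{0,1}(\bar\Omega)$, $a_0\in L^\infty(\Omega)$, $a_0\ge0$ a.e., $a_0\not\equiv0$, uniformly elliptic with constant $\delta>0$; $\partial_{\nu_A}y=\sum a_{ij}\partial_{x_i}y\,\nu_j$; $A^*$ the formal adjoint with conormal derivative $\partial_{\nu_{A^*}}$. The function $d:\Omega\times\mathbb{R}\to\mathbb{R}$ is measurable in $x$, $C^2$ in $y$ for a.e. $x$, $\|d(\cdot,0)\|_\infty+\|d_y(\cdot,0)\|_\infty+\|d_{yy}(\cdot,0)\|_\infty<\infty$, $d_y\ge0$, $d_{yy}$ Lipschitz in $y$ on bounded sets uniformly in $x$, and $d_y>0$ on $E_\Omega\times\mathbb{R}$ for some $E_\Omega$ of positive measure. $S(u)\in H^1(\Omega)\cap C(\bar\Omega)$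 is the weak solution of $Ay+d(x,y)=u$ in $\Omega$, $\partial_{\nu_A}y=0$ on $\Gamma$. $(\cdot)_+=\max(0,\cdot)$ pointwise; $(a,b)_+:=\int_\Omega\max(0,a(x)b(x))dx$. Optimality system of the augmented Lagrange sub-problem ($\rho>0$, $0\le\mu\in L^2$): $(\bar y,\bar u,\bar p)$ with $\bar u\in U_{ad}$, $\bar y=S(\bar u)$, $\bar p\in H^1(\Omega)$ weak solution of $A^*\bar p+d_y(x,\bar y)\bar p=\bar y-y_d+(\mu+\rho(\bar y-\psi))_+$, $\partial_{\nu_{A^*}}\bar p=0$, and $(\bar p+\alpha\bar u,u-\bar u)\ge0$ for all $u\in U_{ad}$. Algorithm: choose $\rho_1>0$, $0\le\mu_1\in L^2(\Omega)$, $\theta>1$, $\tau\in(0,1)$, $R_0^+>0$; $k=n=1$. Iteration $k$: (1) choose a solution $(\bar y_k,\bar u_k,\bar p_k)$ of the optimality system with $\mu=\mu_k,\rho=\rho_k$; (2) $\bar\mu_k:=(\mu_k+\rho_k(\bar y_k-\psi))_+$; (3) $R_k:=\|(\bar y_k-\psi)_+\|_{C(\bar\Omega)}+(\bar\mu_k,\psi-\bar y_k)_+$; (4) if $R_k\le\tau R^+_{n-1}$ the step is successful: $\mu_{k+1}:=\bar\mu_k$, $\rho_{k+1}:=\rho_k$, $R_n^+:=R_k$, $n:=n+1$; (5) otherwise $\mu_{k+1}:=\mu_k$, $\rho_{k+1}:=\theta\rho_k$; then $k:=k+1$ and repeat indefinitely. *)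

theory Defs
  imports "HOL-Analysis.Analysis"
begin

type_synonym 'n fn = "real^'n \<Rightarrow> real"

definition L2 :: "(real^'n) set \<Rightarrow> 'n fn \<Rightarrow> bool" where
  "L2 \<Omega> f \<longleftrightarrow> f \<in> borel_measurable (lebesgue_on \<Omega>) \<and> integrable (lebesgue_on \<Omega>) (\<lambda>x. (f x)^2)"

definition Linf :: "(real^'n) set \<Rightarrow> 'n fn \<Rightarrow> bool" where
  "Linf \<Omega> f \<longleftrightarrow> f \<in> borel_measurable (lebesgue_on \<Omega>) \<and> (\<exists>C. AE x in lebesgue_on \<Omega>. \<bar>f x\<bar> \<le> C)"

definition partial :: "'n fn \<Rightarrow> 'n::finite \<Rightarrow> real^'n \<Rightarrow> real" where
  "partial f i x = frechet_derivative f (at x) (axis i 1)"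

coinductive smooth_fun :: "'n::finite fn \<Rightarrow> bool" where
  "\<lbrakk> \<forall>x. f differentiable (at x); \<forall>i. smooth_fun (partial f i) \<rbrakk> \<Longrightarrow> smooth_fun f"

definition test_fun :: "(real^'n::finite) set \<Rightarrow> 'n fn \<Rightarrow> bool" where
  "test_fun \<Omega> \<phi> \<longleftrightarrow> smooth_fun \<phi> \<and> compact (closure {x. \<phi> x \<noteq> 0}) \<and> closure {x. \<phi> x \<noteq> 0} \<subseteq> \<Omega>"

definition weak_grad :: "(real^'n::finite) set \<Rightarrow> 'n fn \<Rightarrow> (real^'n \<Rightarrow> real^'n) \<Rightarrow> bool" where
  "weak_grad \<Omega> f G \<longleftrightarrow> (\<forall>i. L2 \<Omega> (\<lambda>x. G x $ i)) \<and>
     (\<forall>\<phi>. test_fun \<Omega> \<phi> \<longrightarrow> (\<forall>i. (\<integral>x. f x * partial \<phi> i x \<partial>lebesgue_on \<Omega>) = - (\<integral>x. G x $ i * \<phi> x \<partial>lebesgue_on \<Omega>)))"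

definition H1 :: "(real^'n::finite) set \<Rightarrow> 'n fn \<Rightarrow> bool" where
  "H1 \<Omega> f \<longleftrightarrow> L2 \<Omega> f \<and> (\<exists>G. weak_grad \<Omega> f G)"

text \<open>C^{1,1} boundary: near each boundary point, after a rigid motion, \<Omega> is the subgraph of a
  C^{1,1} function of the remaining N-1 coordinates.\<close>
definition C11_boundary :: "(real^'n::finite) set \<Rightarrow> bool" where
  "C11_boundary \<Omega> \<longleftrightarrow> (\<forall>x0 \<in> frontier \<Omega>. \<exists>r>0. \<exists>(T::real^'n \<Rightarrow> real^'n) (j::'n) (h::real^'n \<Rightarrow> real) (h'::real^'n \<Rightarrow> real^'n \<Rightarrow> real).
      orthogonal_transformation T \<and>
      (\<forall>z w. (\<forall>i. i \<noteq> j \<longrightarrow> z $ i = w $ i) \<longrightarrow> h z = h w) \<and>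
      (\<forall>z. (h has_derivative h' z) (at z)) \<and>
      (\<exists>L. \<forall>z w. onorm (\<lambda>v. h' z v - h' w v) \<le> L * norm (z - w)) \<and>
      \<Omega> \<inter> ball x0 r = {x \<in> ball x0 r. T (x - x0) $ j < h (T (x - x0))})"

definition admissible_domain :: "(real^'n::finite) set \<Rightarrow> bool" where
  "admissible_domain \<Omega> \<longleftrightarrow> open \<Omega> \<and> connected \<Omega> \<and> \<Omega> \<noteq> {} \<and> bounded \<Omega> \<and>
     (C11_boundary \<Omega> \<or> (convex \<Omega> \<and> polytope (closure \<Omega>)))"

definition problem_data ::
  "(real^'n::finite) set \<Rightarrow> ('n \<Rightarrow> 'n \<Rightarrow> 'n fn) \<Rightarrow> 'n fn \<Rightarrow> (real^'n \<Rightarrow> real \<Rightarrow> real)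
    \<Rightarrow> 'n fn \<Rightarrow> 'n fn \<Rightarrow> real \<Rightarrow> 'n fn \<Rightarrow> 'n fn \<Rightarrow> bool" where
  "problem_data \<Omega> a a0 d yd \<psi> \<alpha> ua ub \<longleftrightarrow>
     CARD('n) \<in> {2, 3} \<and> admissible_domain \<Omega> \<and>
     L2 \<Omega> yd \<and> continuous_on (closure \<Omega>) \<psi> \<and> \<alpha> > 0 \<and>
     Linf \<Omega> ua \<and> Linf \<Omega> ub \<and> (AE x in lebesgue_on \<Omega>. ua x \<le> ub x) \<and>
     (\<exists>L. \<forall>i j. L-lipschitz_on (closure \<Omega>) (a i j)) \<and>
     Linf \<Omega> a0 \<and> (AE x in lebesgue_on \<Omega>. a0 x \<ge> 0) \<and> \<not> (AE x in lebesgue_on \<Omega>. a0 x = 0) \<and>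
     (\<exists>\<delta>>0. AE x in lebesgue_on \<Omega>. \<forall>\<xi>::real^'n.
         (\<Sum>i\<in>UNIV. \<Sum>j\<in>UNIV. a i j x * \<xi> $ i * \<xi> $ j) \<ge> \<delta> * (norm \<xi>)^2) \<and>
     (\<forall>y. (\<lambda>x. d x y) \<in> borel_measurable (lebesgue_on \<Omega>)) \<and>
     (AE x in lebesgue_on \<Omega>. (\<forall>y. d x differentiable (at y)) \<and>
                               (\<forall>y. deriv (d x) differentiable (at y)) \<and>
                               continuous_on UNIV (deriv (deriv (d x)))) \<and>
     (\<exists>C. AE x in lebesgue_on \<Omega>. \<bar>d x 0\<bar> + \<bar>deriv (d x) 0\<bar> + \<bar>deriv (deriv (d x)) 0\<bar> \<le> C) \<and>
     (AE x in lebesgue_on \<Omega>. \<forall>y. deriv (d x) y \<ge> 0) \<and>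
     (\<forall>M. \<exists>L. AE x in lebesgue_on \<Omega>. \<forall>y1 y2. \<bar>y1\<bar> \<le> M \<longrightarrow> \<bar>y2\<bar> \<le> M \<longrightarrow>
          \<bar>deriv (deriv (d x)) y1 - deriv (deriv (d x)) y2\<bar> \<le> L * \<bar>y1 - y2\<bar>) \<and>
     (\<exists>E. E \<subseteq> \<Omega> \<and> E \<in> sets lebesgue \<and> emeasure lebesgue E > 0 \<and>
          (\<forall>x\<in>E. \<forall>y. deriv (d x) y > 0))"

definition Uad :: "(real^'n) set \<Rightarrow> 'n fn \<Rightarrow> 'n fn \<Rightarrow> 'n fn \<Rightarrow> bool" where
  "Uad \<Omega> ua ub u \<longleftrightarrow> Linf \<Omega> u \<and> (AE x in lebesgue_on \<Omega>. ua x \<le> u x \<and> u x \<le> ub x)"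

text \<open>y is a weak solution of A y + d(x,y) = u in \<Omega>, conormal derivative 0 on the boundary.\<close>
definition state_weak ::
  "(real^'n::finite) set \<Rightarrow> ('n \<Rightarrow> 'n \<Rightarrow> 'n fn) \<Rightarrow> 'n fn \<Rightarrow> (real^'n \<Rightarrow> real \<Rightarrow> real) \<Rightarrow> 'n fn \<Rightarrow> 'n fn \<Rightarrow> bool" where
  "state_weak \<Omega> a a0 d u y \<longleftrightarrow> H1 \<Omega> y \<and> (\<exists>G. weak_grad \<Omega> y G \<and>
     (\<forall>v Gv. L2 \<Omega> v \<and> weak_grad \<Omega> v Gv \<longrightarrow>
        (\<integral>x. (\<Sum>i\<in>UNIV. \<Sum>j\<in>UNIV. a i j x * G x $ i * Gv x $ j) + a0 x * y x * v x + d x (y x) * v x \<partial>lebesgue_on \<Omega>)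
        = (\<integral>x. u x * v x \<partial>lebesgue_on \<Omega>)))"

text \<open>p is a weak solution of A^* p + c p = f in \<Omega>, adjoint conormal derivative 0 on the boundary.\<close>
definition adjoint_weak ::
  "(real^'n::finite) set \<Rightarrow> ('n \<Rightarrow> 'n \<Rightarrow> 'n fn) \<Rightarrow> 'n fn \<Rightarrow> 'n fn \<Rightarrow> 'n fn \<Rightarrow> 'n fn \<Rightarrow> bool" where
  "adjoint_weak \<Omega> a a0 c f p \<longleftrightarrow> H1 \<Omega> p \<and> (\<exists>G. weak_grad \<Omega> p G \<and>
     (\<forall>v Gv. L2 \<Omega> v \<and> weak_grad \<Omega> v Gv \<longrightarrow>
        (\<integral>x. (\<Sum>i\<in>UNIV. \<Sum>j\<in>UNIV. a i j x * Gv x $ i * G x $ j) + a0 x * p x * v x + c x * p x * v x \<partial>lebesgue_on \<Omega>)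
        = (\<integral>x. f x * v x \<partial>lebesgue_on \<Omega>)))"

definition opt_system ::
  "(real^'n::finite) set \<Rightarrow> ('n \<Rightarrow> 'n \<Rightarrow> 'n fn) \<Rightarrow> 'n fn \<Rightarrow> (real^'n \<Rightarrow> real \<Rightarrow> real)
    \<Rightarrow> 'n fn \<Rightarrow> 'n fn \<Rightarrow> real \<Rightarrow> 'n fn \<Rightarrow> 'n fn
    \<Rightarrow> 'n fn \<Rightarrow> real \<Rightarrow> 'n fn \<Rightarrow> 'n fn \<Rightarrow> 'n fn \<Rightarrow> bool" where
  "opt_system \<Omega> a a0 d yd \<psi> \<alpha> ua ub \<mu> \<rho> y u p \<longleftrightarrow>
     Uad \<Omega> ua ub u \<and>
     continuous_on (closure \<Omega>) y \<and> state_weak \<Omega> a a0 d u y \<and>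
     adjoint_weak \<Omega> a a0 (\<lambda>x. deriv (d x) (y x))
        (\<lambda>x. y x - yd x + max 0 (\<mu> x + \<rho> * (y x - \<psi> x))) p \<and>
     (\<forall>v. Uad \<Omega> ua ub v \<longrightarrow> (\<integral>x. (p x + \<alpha> * u x) * (v x - u x) \<partial>lebesgue_on \<Omega>) \<ge> 0)"

text \<open>(a,b)_+ := integral of max(0, a b).\<close>
definition pos_pair :: "(real^'n) set \<Rightarrow> 'n fn \<Rightarrow> 'n fn \<Rightarrow> real" where
  "pos_pair \<Omega> f g = (\<integral>x. max 0 (f x * g x) \<partial>lebesgue_on \<Omega>)"

definition mubar :: "'n fn \<Rightarrow> (nat \<Rightarrow> 'n fn) \<Rightarrow> (nat \<Rightarrow> real) \<Rightarrow> (nat \<Rightarrow> 'n fn) \<Rightarrow> nat \<Rightarrow> 'n fn" where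
  "mubar \<psi> \<mu> \<rho> y k = (\<lambda>x. max 0 (\<mu> k x + \<rho> k * (y k x - \<psi> x)))"

definition Rval :: "(real^'n) set \<Rightarrow> 'n fn \<Rightarrow> (nat \<Rightarrow> 'n fn) \<Rightarrow> (nat \<Rightarrow> real) \<Rightarrow> (nat \<Rightarrow> 'n fn) \<Rightarrow> nat \<Rightarrow> real" where
  "Rval \<Omega> \<psi> \<mu> \<rho> y k =
     (SUP x\<in>closure \<Omega>. max 0 (y k x - \<psi> x)) + pos_pair \<Omega> (mubar \<psi> \<mu> \<rho> y k) (\<lambda>x. \<psi> x - y k x)"

text \<open>A run of the algorithm (iterations indexed from 0). Rp k is the reference value R^+_{n-1}
  in force at iteration k; step k is successful iff Rval k \<le> \<tau> * Rp k.\<close>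
definition aug_lag_run ::
  "(real^'n::finite) set \<Rightarrow> ('n \<Rightarrow> 'n \<Rightarrow> 'n fn) \<Rightarrow> 'n fn \<Rightarrow> (real^'n \<Rightarrow> real \<Rightarrow> real)
    \<Rightarrow> 'n fn \<Rightarrow> 'n fn \<Rightarrow> real \<Rightarrow> 'n fn \<Rightarrow> 'n fn
    \<Rightarrow> real \<Rightarrow> real \<Rightarrow> real \<Rightarrow> real \<Rightarrow> 'n fn
    \<Rightarrow> (nat \<Rightarrow> 'n fn) \<Rightarrow> (nat \<Rightarrow> real) \<Rightarrow> (nat \<Rightarrow> real)
    \<Rightarrow> (nat \<Rightarrow> 'n fn) \<Rightarrow> (nat \<Rightarrow> 'n fn) \<Rightarrow> (nat \<Rightarrow> 'n fn) \<Rightarrow> bool" where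
  "aug_lag_run \<Omega> a a0 d yd \<psi> \<alpha> ua ub \<theta> \<tau> R0 \<rho>1 \<mu>1 \<mu> \<rho> Rp y u p \<longleftrightarrow>
     \<rho>1 > 0 \<and> L2 \<Omega> \<mu>1 \<and> (AE x in lebesgue_on \<Omega>. \<mu>1 x \<ge> 0) \<and> \<theta> > 1 \<and> 0 < \<tau> \<and> \<tau> < 1 \<and> R0 > 0 \<and>
     \<mu> 0 = \<mu>1 \<and> \<rho> 0 = \<rho>1 \<and> Rp 0 = R0 \<and>
     (\<forall>k. opt_system \<Omega> a a0 d yd \<psi> \<alpha> ua ub (\<mu> k) (\<rho> k) (y k) (u k) (p k)) \<and>
     (\<forall>k. if Rval \<Omega> \<psi> \<mu> \<rho> y k \<le> \<tau> * Rp k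
          then \<mu> (Suc k) = mubar \<psi> \<mu> \<rho> y k \<and> \<rho> (Suc k) = \<rho> k \<and> Rp (Suc k) = Rval \<Omega> \<psi> \<mu> \<rho> y k
          else \<mu> (Suc k) = \<mu> k \<and> \<rho> (Suc k) = \<theta> * \<rho> k \<and> Rp (Suc k) = Rp k)"

end

theory Submission
  imports Defs
begin

text \<open>Let \<open>K\<close> be the last successful step. From then on the multiplier is frozen, \<open>\<mu>\<^sub>k = \<mu>\<^sub>K\<close>,
  while the penalty grows geometrically, \<open>\<rho>\<^sub>k = \<theta>\<^bsup>k-K\<^esup> \<rho>\<^sub>K\<close>. Pointwise,
  \<open>max(0, m + \<rho>(y - \<psi>)) (\<psi> - y) \<le> m\<^sup>2 / (4\<rho>)\<close>, the maximum over \<open>\<psi> - y\<close> of the quadratic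
  \<open>(m - \<rho> t) t\<close>. Integrating gives \<open>(\<mu>\<^sub>k, \<psi> - y\<^sub>k)\<^sub>+ \<le> \<parallel>\<mu>\<^sub>K\<parallel>\<^sup>2 / (4\<rho>\<^sub>k) \<rightarrow> 0\<close>; the only
  analytic input is that \<open>\<mu>\<^sub>K \<in> L\<^sup>2\<close>, which holds because every update keeps the multiplier in \<open>L\<^sup>2\<close>.\<close>

lemma L2_add_scaled:
  assumes "L2 \<Omega> f" "L2 \<Omega> g"
  shows "L2 \<Omega> (\<lambda>x. f x + c * g x)"
proof -
  have mf: "f \<in> borel_measurable (lebesgue_on \<Omega>)" and mg: "g \<in> borel_measurable (lebesgue_on \<Omega>)"
    and if2: "integrable (lebesgue_on \<Omega>) (\<lambda>x. (f x)\<^sup>2)" and ig2: "integrable (lebesgue_on \<Omega>) (\<lambda>x. (g x)\<^sup>2)"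
    using assms unfolding L2_def by auto
  have m: "(\<lambda>x. f x + c * g x) \<in> borel_measurable (lebesgue_on \<Omega>)" using mf mg by measurable
  have "integrable (lebesgue_on \<Omega>) (\<lambda>x. (f x + c * g x)\<^sup>2)"
  proof (rule Bochner_Integration.integrable_bound)
    show "integrable (lebesgue_on \<Omega>) (\<lambda>x. 2 * (f x)\<^sup>2 + 2 * c\<^sup>2 * (g x)\<^sup>2)"
      using if2 ig2 by auto
    show "(\<lambda>x. (f x + c * g x)\<^sup>2) \<in> borel_measurable (lebesgue_on \<Omega>)" using m by measurable
    have "(f x + c * g x)\<^sup>2 \<le> 2 * (f x)\<^sup>2 + 2 * c\<^sup>2 * (g x)\<^sup>2" for x
      using sum_squares_ge_zero[of "f x - c * g x" 0] by (simp add: power2_eq_square algebra_simps)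
    then show "AE x in lebesgue_on \<Omega>. norm ((f x + c * g x)\<^sup>2) \<le> norm (2 * (f x)\<^sup>2 + 2 * c\<^sup>2 * (g x)\<^sup>2)"
      by simp
  qed
  with m show ?thesis unfolding L2_def by auto
qed

lemma L2_max_0:
  assumes "L2 \<Omega> f"
  shows "L2 \<Omega> (\<lambda>x. max 0 (f x))"
proof -
  have mf: "f \<in> borel_measurable (lebesgue_on \<Omega>)" and if2: "integrable (lebesgue_on \<Omega>) (\<lambda>x. (f x)\<^sup>2)"
    using assms unfolding L2_def by auto
  have m: "(\<lambda>x. max 0 (f x)) \<in> borel_measurable (lebesgue_on \<Omega>)" using mf by measurable
  have "integrable (lebesgue_on \<Omega>) (\<lambda>x. (max 0 (f x))\<^sup>2)"
  proof (rule Bochner_Integration.integrable_bound[OF if2])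
    show "(\<lambda>x. (max 0 (f x))\<^sup>2) \<in> borel_measurable (lebesgue_on \<Omega>)" using m by measurable
    show "AE x in lebesgue_on \<Omega>. norm ((max 0 (f x))\<^sup>2) \<le> norm ((f x)\<^sup>2)"
      by (rule AE_I2) (auto simp: max_def)
  qed
  with m show ?thesis unfolding L2_def by auto
qed

lemma L2_if_continuous_on_closure:
  assumes "bounded \<Omega>" "\<Omega> \<in> sets lebesgue" "continuous_on (closure \<Omega>) g"
  shows "L2 \<Omega> g"
proof -
  have fin: "finite_measure (lebesgue_on \<Omega>)"
    using assms(1,2) by (intro finite_measure_lebesgue_on bounded_set_imp_lmeasurable)
  have "continuous_on \<Omega> g" using assms(3) closure_subset continuous_on_subset by blast
  then have m: "g \<in> borel_measurable (lebesgue_on \<Omega>)"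
    using assms(2) by (rule continuous_imp_measurable_on_sets_lebesgue)
  have "compact (closure \<Omega>)" using assms(1) compact_closure by blast
  then have "bounded (g ` closure \<Omega>)"
    using assms(3) compact_continuous_image compact_imp_bounded by blast
  then obtain B where B: "\<And>x. x \<in> closure \<Omega> \<Longrightarrow> norm (g x) \<le> B"
    unfolding bounded_iff by auto
  have "integrable (lebesgue_on \<Omega>) (\<lambda>x. (g x)\<^sup>2)"
  proof (rule finite_measure.integrable_const_bound[OF fin, where B="B\<^sup>2"])
    show "(\<lambda>x. (g x)\<^sup>2) \<in> borel_measurable (lebesgue_on \<Omega>)" using m by measurable
    have "norm ((g x)\<^sup>2) \<le> B\<^sup>2" if "x \<in> \<Omega>" for x
    proof -
      have "\<bar>g x\<bar> \<le> B" using B[of x] that closure_subset by auto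
      then have "\<bar>g x\<bar>\<^sup>2 \<le> B\<^sup>2" by (intro power_mono) simp_all
      then show ?thesis by simp
    qed
    then show "AE x in lebesgue_on \<Omega>. norm ((g x)\<^sup>2) \<le> B\<^sup>2"
      by (intro AE_I2) simp
  qed
  with m show ?thesis unfolding L2_def by auto
qed

lemma max_0_penalized_multiplier_mult_le:
  fixes m r y s :: real
  assumes "r > 0"
  shows "max 0 (max 0 (m + r * (y - s)) * (s - y)) \<le> m\<^sup>2 / (4 * r)"
proof (cases "m + r * (y - s) \<le> 0")
  case True
  then show ?thesis using assms by simp
next
  case False
  have "4 * r * ((m + r * (y - s)) * (s - y)) \<le> m\<^sup>2"
    using sum_squares_ge_zero[of "m - 2 * r * (s - y)" 0] by (simp add: power2_eq_square algebra_simps)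
  with False assms show ?thesis by (simp add: field_simps)
qed

lemma pos_pair_penalized_multiplier_le:
  assumes "r > 0" "integrable (lebesgue_on \<Omega>) (\<lambda>x. (m x)\<^sup>2)"
  shows "pos_pair \<Omega> (\<lambda>x. max 0 (m x + r * (y x - \<psi> x))) (\<lambda>x. \<psi> x - y x)
           \<le> (\<integral>x. (m x)\<^sup>2 \<partial>lebesgue_on \<Omega>) / (4 * r)"
proof -
  have "pos_pair \<Omega> (\<lambda>x. max 0 (m x + r * (y x - \<psi> x))) (\<lambda>x. \<psi> x - y x)
      \<le> (\<integral>x. (m x)\<^sup>2 / (4 * r) \<partial>lebesgue_on \<Omega>)"
    unfolding pos_pair_def
    using assms max_0_penalized_multiplier_mult_le[OF assms(1)] by (intro integral_mono') auto
  then show ?thesis by simp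
qed

lemma aug_lag_run_update:
  assumes "aug_lag_run \<Omega> a a0 d yd \<psi> \<alpha> ua ub \<theta> \<tau> R0 \<rho>1 \<mu>1 \<mu> \<rho> Rp y u p"
  shows "\<mu> (Suc k) = (if Rval \<Omega> \<psi> \<mu> \<rho> y k \<le> \<tau> * Rp k then mubar \<psi> \<mu> \<rho> y k else \<mu> k)"
    and "\<rho> (Suc k) = (if Rval \<Omega> \<psi> \<mu> \<rho> y k \<le> \<tau> * Rp k then \<rho> k else \<theta> * \<rho> k)"
proof -
  have "if Rval \<Omega> \<psi> \<mu> \<rho> y k \<le> \<tau> * Rp k
          then \<mu> (Suc k) = mubar \<psi> \<mu> \<rho> y k \<and> \<rho> (Suc k) = \<rho> k \<and> Rp (Suc k) = Rval \<Omega> \<psi> \<mu> \<rho> y k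
          else \<mu> (Suc k) = \<mu> k \<and> \<rho> (Suc k) = \<theta> * \<rho> k \<and> Rp (Suc k) = Rp k"
    using assms unfolding aug_lag_run_def by blast
  then show "\<mu> (Suc k) = (if Rval \<Omega> \<psi> \<mu> \<rho> y k \<le> \<tau> * Rp k then mubar \<psi> \<mu> \<rho> y k else \<mu> k)"
    and "\<rho> (Suc k) = (if Rval \<Omega> \<psi> \<mu> \<rho> y k \<le> \<tau> * Rp k then \<rho> k else \<theta> * \<rho> k)"
    by (simp_all split: if_splits)
qed

lemma aug_lag_run_penalty_pos:
  assumes "aug_lag_run \<Omega> a a0 d yd \<psi> \<alpha> ua ub \<theta> \<tau> R0 \<rho>1 \<mu>1 \<mu> \<rho> Rp y u p"
  shows "\<rho> k > 0"
proof (induction k)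
  case 0
  then show ?case using assms unfolding aug_lag_run_def by simp
next
  case (Suc k)
  moreover have "\<theta> > 1" using assms unfolding aug_lag_run_def by simp
  ultimately show ?case by (simp add: aug_lag_run_update(2)[OF assms])
qed

lemma aug_lag_run_multiplier_L2:
  assumes "aug_lag_run \<Omega> a a0 d yd \<psi> \<alpha> ua ub \<theta> \<tau> R0 \<rho>1 \<mu>1 \<mu> \<rho> Rp y u p" "L2 \<Omega> \<psi>"
  shows "L2 \<Omega> (\<mu> k)"
proof (induction k)
  case 0
  then show ?case using assms(1) unfolding aug_lag_run_def by simp
next
  case (Suc k)
  have "L2 \<Omega> (y k)"
    using assms(1) unfolding aug_lag_run_def opt_system_def state_weak_def H1_def by blast
  then have "L2 \<Omega> (\<lambda>x. \<mu> k x + \<rho> k * (y k x + (-1) * \<psi> x))"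
    using Suc.IH assms(2) by (intro L2_add_scaled)
  then have "L2 \<Omega> (mubar \<psi> \<mu> \<rho> y k)"
    unfolding mubar_def using L2_max_0 by simp
  with Suc.IH show ?case by (simp add: aug_lag_run_update(1)[OF assms(1)])
qed

lemma aug_lag_run_unsuccessful_tail:
  assumes "aug_lag_run \<Omega> a a0 d yd \<psi> \<alpha> ua ub \<theta> \<tau> R0 \<rho>1 \<mu>1 \<mu> \<rho> Rp y u p"
    and "\<And>k. K \<le> k \<Longrightarrow> \<not> Rval \<Omega> \<psi> \<mu> \<rho> y k \<le> \<tau> * Rp k"
  shows "\<mu> (K + n) = \<mu> K" and "\<rho> (K + n) = \<theta> ^ n * \<rho> K"
  by (induction n) (simp_all add: aug_lag_run_update[OF assms(1)] assms(2))

lemma aug_lag_run_unsuccessful_tail_div_penalty_tendsto_0: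
  assumes run: "aug_lag_run \<Omega> a a0 d yd \<psi> \<alpha> ua ub \<theta> \<tau> R0 \<rho>1 \<mu>1 \<mu> \<rho> Rp y u p"
    and "\<And>k. K \<le> k \<Longrightarrow> \<not> Rval \<Omega> \<psi> \<mu> \<rho> y k \<le> \<tau> * Rp k"
  shows "(\<lambda>k. c / \<rho> k) \<longlonglongrightarrow> 0"
proof -
  have \<theta>: "\<theta> > 1" using run unfolding aug_lag_run_def by simp
  have "(\<lambda>n. c / \<rho> K * inverse \<theta> ^ n) \<longlonglongrightarrow> c / \<rho> K * 0"
    using \<theta> by (intro tendsto_mult tendsto_const LIMSEQ_power_zero) (simp add: inverse_less_1_iff)
  moreover have "c / \<rho> (n + K) = c / \<rho> K * inverse \<theta> ^ n" for n
  proof -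
    have "\<rho> (n + K) = \<theta> ^ n * \<rho> K"
      using aug_lag_run_unsuccessful_tail(2)[where K=K and n=n, OF assms] by (simp only: add.commute)
    then show ?thesis by (simp add: power_inverse divide_inverse)
  qed
  ultimately have "(\<lambda>n. c / \<rho> (n + K)) \<longlonglongrightarrow> 0" by simp
  then show ?thesis by (rule LIMSEQ_offset)
qed

theorem lemma4p2:
  fixes \<Omega> :: "(real^'n::finite) set"
  assumes "problem_data \<Omega> a a0 d yd \<psi> \<alpha> ua ub"
    and "aug_lag_run \<Omega> a a0 d yd \<psi> \<alpha> ua ub \<theta> \<tau> R0 \<rho>1 \<mu>1 \<mu> \<rho> Rp y u p"
    and "finite {k. Rval \<Omega> \<psi> \<mu> \<rho> y k \<le> \<tau> * Rp k}"
  shows "limsup (\<lambda>k. ereal (pos_pair \<Omega> (mubar \<psi> \<mu> \<rho> y k) (\<lambda>x. \<psi> x - y k x))) \<le> 0"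
proof -
  obtain K where unsuccessful: "\<And>k. K \<le> k \<Longrightarrow> \<not> Rval \<Omega> \<psi> \<mu> \<rho> y k \<le> \<tau> * Rp k"
    using finite_nat_bounded[OF assms(3)] by (auto simp: subset_eq not_le[symmetric])
  have "L2 \<Omega> \<psi>"
    using assms(1) unfolding problem_data_def admissible_domain_def
    by (auto intro: L2_if_continuous_on_closure)
  then have "integrable (lebesgue_on \<Omega>) (\<lambda>x. (\<mu> K x)\<^sup>2)"
    using aug_lag_run_multiplier_L2[OF assms(2)] unfolding L2_def by blast
  define C where "C = (\<integral>x. (\<mu> K x)\<^sup>2 \<partial>lebesgue_on \<Omega>)"
  have "eventually (\<lambda>k. ereal (pos_pair \<Omega> (mubar \<psi> \<mu> \<rho> y k) (\<lambda>x. \<psi> x - y k x))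
                        \<le> ereal (C / 4 / \<rho> k)) sequentially"
    using eventually_ge_at_top[of K]
  proof eventually_elim
    case (elim k)
    then have "\<mu> k = \<mu> K"
      using aug_lag_run_unsuccessful_tail(1)[where K=K and n="k - K", OF assms(2) unsuccessful] by simp
    then show ?case
      using pos_pair_penalized_multiplier_le[OF aug_lag_run_penalty_pos[OF assms(2)] \<open>integrable _ _\<close>]
      unfolding mubar_def C_def by simp
  qed
  then have "limsup (\<lambda>k. ereal (pos_pair \<Omega> (mubar \<psi> \<mu> \<rho> y k) (\<lambda>x. \<psi> x - y k x)))
      \<le> limsup (\<lambda>k. ereal (C / 4 / \<rho> k))"
    by (rule Limsup_mono)
  also have "\<dots> = 0"
    using aug_lag_run_unsuccessful_tail_div_penalty_tendsto_0[where K=K and c="C / 4", OF assms(2) unsuccessful]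
    by (intro lim_imp_Limsup) (simp_all add: zero_ereal_def)
  finally show ?thesis .
qed

end
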